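(* Let $(X,d)$ be a complete metric space and let $T\colon X\to X$ be a mapping satisfying: (i) for every $\varepsilon>0$ there exists $\delta>0$ such that for all $x,y\in X$, $\frac{1}{2}\{d(x,Ty)+d(y,Tx)\}<\varepsilon+\delta$ implies $d(Tx,Ty)\le\varepsilon$; (ii) for all $x,y\in X$, $x\neq y$ implies $d(Tx,Ty)<\frac{1}{2}\{d(x,Ty)+d(y,Tx)\}$. Then $T$ has a unique fixed point. *)

theory Defs
  imports "HOL-Analysis.Analysis"
begin

end

theory Submission
  imports Defs
begin

text \<open>
  Condition (ii) applied to consecutive points of an orbit \<open>x\<^sub>n = T\<^sup>n x\<^sub>0\<close> and the triangle
  inequality show that the step lengths \<open>d(x\<^sub>n, x\<^sub>n\<^sub>+\<^sub>1)\<close> decrease; condition (i) forces their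
  limit to be \<open>0\<close> and, applied to \<open>x\<^sub>N\<close> and \<open>x\<^sub>m\<close>, traps the tail of the orbit in a small
  ball around \<open>x\<^sub>N\<close>. Hence the orbit is Cauchy, and (ii) again shows that its limit is
  fixed and that a fixed point is unique.
\<close>

locale chatterjea_contractive =
  fixes T :: "'a::metric_space \<Rightarrow> 'a"
  assumes contractive: "\<And>x y. x \<noteq> y \<Longrightarrow> dist (T x) (T y) < (dist x (T y) + dist y (T x)) / 2"
begin

lemma fixed_point_unique:
  assumes "T x = x" and "T y = y"
  shows "x = y"
  using contractive[of x y] assms by (auto simp: dist_commute)

lemma dist_step_less:
  assumes "x \<noteq> T x"
  shows "dist (T x) (T (T x)) < dist x (T x)"
proof -
  have "dist (T x) (T (T x)) < (dist x (T (T x)) + dist (T x) (T x)) / 2"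
    using contractive[OF assms] .
  also have "\<dots> \<le> (dist x (T x) + dist (T x) (T (T x))) / 2"
    using dist_triangle[of x "T (T x)" "T x"] by simp
  finally show ?thesis by simp
qed

lemma dist_step_le: "dist (T x) (T (T x)) \<le> dist x (T x)"
  by (cases "x = T x") (simp_all add: dist_step_less less_imp_le)

lemma orbit_limit_fixed:
  assumes lim: "(\<lambda>n. (T ^^ n) x) \<longlonglongrightarrow> z"
  shows "T z = z"
proof -
  have lim_Suc: "(\<lambda>n. T ((T ^^ n) x)) \<longlonglongrightarrow> z"
    using LIMSEQ_Suc[OF lim] by simp
  have "dist (T y) (T z) \<le> (dist y (T z) + dist z (T y)) / 2" for y
    using contractive[of y z] by (cases "y = z") auto
  moreover have "(\<lambda>n. dist (T ((T ^^ n) x)) (T z)) \<longlonglongrightarrow> dist z (T z)"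
    by (intro tendsto_intros lim_Suc)
  moreover have "(\<lambda>n. (dist ((T ^^ n) x) (T z) + dist z (T ((T ^^ n) x))) / 2)
      \<longlonglongrightarrow> (dist z (T z) + dist z z) / 2"
    by (intro tendsto_intros lim lim_Suc) simp
  ultimately have "dist z (T z) \<le> (dist z (T z) + dist z z) / 2"
    by (intro LIMSEQ_le) auto
  then show ?thesis by simp
qed

end

lemma orbit_stays_close:
  fixes T :: "'a::metric_space \<Rightarrow> 'a"
  assumes close: "\<And>x y. (dist x (T y) + dist y (T x)) / 2 < \<epsilon> + \<delta> \<Longrightarrow> dist (T x) (T y) \<le> \<epsilon>"
    and small_steps: "\<And>n. n \<ge> N \<Longrightarrow> dist ((T ^^ n) x) ((T ^^ Suc n) x) < \<eta> / 2"
    and "0 \<le> \<epsilon>" and "\<eta> \<le> \<delta>"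
  shows "dist ((T ^^ N) x) ((T ^^ (N + k)) x) \<le> \<epsilon> + \<eta> / 2"
proof (induction k)
  case 0
  have "0 < \<eta>"
    using small_steps[of N] zero_le_dist[of "(T ^^ N) x" "(T ^^ Suc N) x"] by linarith
  then show ?case using \<open>0 \<le> \<epsilon>\<close> by simp
next
  case (Suc k)
  define y z where "y = (T ^^ N) x" and "z = (T ^^ (N + k)) x"
  have yz: "dist y z \<le> \<epsilon> + \<eta> / 2" using Suc.IH by (simp add: y_def z_def)
  have step_y: "dist y (T y) < \<eta> / 2" and step_z: "dist z (T z) < \<eta> / 2"
    using small_steps[of N] small_steps[of "N + k"] by (simp_all add: y_def z_def)
  have "dist y (T z) \<le> dist y z + dist z (T z)" and "dist z (T y) \<le> dist y z + dist y (T y)"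
    using dist_triangle[of y "T z" z] dist_triangle[of z "T y" y] by (simp_all add: dist_commute)
  then have "(dist y (T z) + dist z (T y)) / 2 < \<epsilon> + \<delta>"
    using yz step_y step_z \<open>\<eta> \<le> \<delta>\<close> by simp
  then have "dist (T y) (T z) \<le> \<epsilon>" by (rule close)
  moreover have "dist y (T z) \<le> dist y (T y) + dist (T y) (T z)" by (rule dist_triangle)
  ultimately have "dist y (T z) \<le> \<epsilon> + \<eta> / 2" using step_y by simp
  then show ?case by (simp add: y_def z_def)
qed

locale chatterjea_meir_keeler = chatterjea_contractive +
  assumes meir_keeler: "\<And>\<epsilon>. \<epsilon> > 0 \<Longrightarrow> \<exists>\<delta>>0. \<forall>x y.
              (dist x (T y) + dist y (T x)) / 2 < \<epsilon> + \<delta> \<longrightarrow> dist (T x) (T y) \<le> \<epsilon>"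
begin

lemma orbit_steps_tendsto_0: "(\<lambda>n. dist ((T ^^ n) x) ((T ^^ Suc n) x)) \<longlonglongrightarrow> 0"
proof -
  define a where "a n = dist ((T ^^ n) x) ((T ^^ Suc n) x)" for n
  have a_Suc: "a (Suc n) \<le> a n" for n
    using dist_step_le[of "(T ^^ n) x"] by (simp add: a_def)
  obtain r where lim: "a \<longlonglongrightarrow> r" and r_le: "\<And>n. r \<le> a n"
    using decseq_convergent[of a 0] a_Suc by (auto simp: decseq_SucI a_def)
  have "r = 0"
  proof (rule ccontr)
    assume "r \<noteq> 0"
    moreover have "r \<ge> 0" using LIMSEQ_le_const[OF lim, of 0] by (simp add: a_def)
    ultimately have "r > 0" by simp
    then obtain \<delta> where "\<delta> > 0" and close: "\<And>x y.
        (dist x (T y) + dist y (T x)) / 2 < r + \<delta> \<Longrightarrow> dist (T x) (T y) \<le> r"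
      using meir_keeler by blast
    obtain n where "a n < r + \<delta>"
      using order_tendstoD(2)[OF lim, of "r + \<delta>"] \<open>\<delta> > 0\<close> eventually_sequentially by auto
    define y where "y = (T ^^ n) x"
    have "(dist y (T (T y)) + dist (T y) (T y)) / 2 \<le> (a n + a (Suc n)) / 2"
      using dist_triangle[of y "T (T y)" "T y"] by (simp add: a_def y_def)
    also have "\<dots> < r + \<delta>" using \<open>a n < r + \<delta>\<close> a_Suc[of n] by simp
    finally have "a (Suc n) = r"
      using close[of y "T y"] r_le[of "Suc n"] by (simp add: a_def y_def)
    then have "T y \<noteq> T (T y)" using \<open>r > 0\<close> by (auto simp: a_def y_def)
    from dist_step_less[OF this] have "a (Suc (Suc n)) < a (Suc n)" by (simp add: a_def y_def)
    with \<open>a (Suc n) = r\<close> r_le[of "Suc (Suc n)"] show False by simp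
  qed
  with lim show ?thesis by (simp add: a_def[abs_def])
qed

lemma orbit_Cauchy: "Cauchy (\<lambda>n. (T ^^ n) x)"
proof (rule metric_CauchyI)
  fix e :: real
  assume "e > 0"
  define \<epsilon> where "\<epsilon> = e / 4"
  have "\<epsilon> > 0" using \<open>e > 0\<close> by (simp add: \<epsilon>_def)
  then obtain \<delta> where "\<delta> > 0" and close: "\<And>x y.
      (dist x (T y) + dist y (T x)) / 2 < \<epsilon> + \<delta> \<Longrightarrow> dist (T x) (T y) \<le> \<epsilon>"
    using meir_keeler by blast
  define \<eta> where "\<eta> = min \<delta> \<epsilon>"
  have "\<eta> > 0" using \<open>\<delta> > 0\<close> \<open>\<epsilon> > 0\<close> by (simp add: \<eta>_def)
  then obtain N where small_steps: "\<And>n. n \<ge> N \<Longrightarrow> dist ((T ^^ n) x) ((T ^^ Suc n) x) < \<eta> / 2"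
    using order_tendstoD(2)[OF orbit_steps_tendsto_0, of "\<eta> / 2" x]
    by (auto simp: eventually_sequentially)
  have near: "dist ((T ^^ N) x) ((T ^^ m) x) \<le> \<epsilon> + \<eta> / 2" if "m \<ge> N" for m
    using orbit_stays_close[of T \<epsilon> \<delta> N x \<eta> "m - N"] close small_steps \<open>\<epsilon> > 0\<close> that
    by (simp add: \<eta>_def)
  have "dist ((T ^^ m) x) ((T ^^ n) x) < e" if "m \<ge> N" "n \<ge> N" for m n
  proof -
    have "dist ((T ^^ m) x) ((T ^^ n) x) \<le> 2 * (\<epsilon> + \<eta> / 2)"
      using dist_triangle3[of "(T ^^ m) x" "(T ^^ n) x" "(T ^^ N) x"] near[OF \<open>m \<ge> N\<close>]
        near[OF \<open>n \<ge> N\<close>] by simp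
    also have "\<dots> < e" using \<open>e > 0\<close> by (simp add: \<eta>_def \<epsilon>_def)
    finally show ?thesis .
  qed
  then show "\<exists>M. \<forall>m\<ge>M. \<forall>n\<ge>M. dist ((T ^^ m) x) ((T ^^ n) x) < e" by blast
qed

end

theorem theorem4p1:
  fixes T :: "'a::complete_space \<Rightarrow> 'a"
  assumes i: "\<And>\<epsilon>. \<epsilon> > 0 \<Longrightarrow> \<exists>\<delta>>0. \<forall>x y.
              (dist x (T y) + dist y (T x)) / 2 < \<epsilon> + \<delta> \<longrightarrow> dist (T x) (T y) \<le> \<epsilon>"
      and ii: "\<And>x y. x \<noteq> y \<Longrightarrow> dist (T x) (T y) < (dist x (T y) + dist y (T x)) / 2"
  shows "\<exists>!x. T x = x"
proof -
  interpret chatterjea_meir_keeler T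
    using i ii by unfold_locales
  obtain z where "(\<lambda>n. (T ^^ n) undefined) \<longlonglongrightarrow> z"
    using orbit_Cauchy Cauchy_convergent convergent_def by blast
  then have "T z = z" by (rule orbit_limit_fixed)
  then show ?thesis using fixed_point_unique by blast
qed

end
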